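(* Let $A, B, C$ be sets, each equipped with a set of predicates $\mathbf{P}(A)\subseteq\mathcal{P}(A)\setminus\{\varnothing\}$ (similarly $\mathbf{P}(B)$, $\mathbf{P}(C)$) of non-empty subsets. Let $R_{ab} \subseteq A\times B$ and $R_{bc}\subseteq B\times C$ be relations, and for $p \subseteq C$ let $\boxplus_{bc} p = \{ y \in B \mid R_{bc}(y) = p\}$, where $R_{bc}(y) = \{z \in C \mid R_{bc}(y,z)\}$. Suppose that: (1) $R_{ab}$ is belief-complete with respect to $\mathbf{P}(B)$; (2) $R_{bc}$ is assumption-complete with respect to $\mathbf{P}(C)$; (3) for each $p \in \mathbf{P}(C)$, $\boxplus_{bc}p \in \mathbf{P}(B)$. Then the relational composite $R_{ac} = R_{ab};R_{bc} \subseteq A \times C$, given by $R_{ac}(x,z) \iff \exists y\in B.\,[R_{ab}(x,y)\wedge R_{bc}(y,z)]$, is assumption-complete with respect to $\mathbf{P}(C)$.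
   Context: A relation $R \subseteq X \times Y$ is assumption-complete with respect to $\mathbf{P}(Y)$ if for every $p \in \mathbf{P}(Y)$ there is $x \in X$ such that for all $y \in Y$: $R(x,y) \iff y \in p$. It is belief-complete with respect to $\mathbf{P}(Y)$ if for every $p \in \mathbf{P}(Y)$ there is $x \in X$ such that for all $y\in Y$, $R(x,y) \Rightarrow y \in p$, and moreover there exists $y$ with $R(x,y)$. *)

theory Defs
  imports Main
begin

definition assumption_complete ::
  "'a set \<Rightarrow> 'b set \<Rightarrow> ('a \<Rightarrow> 'b \<Rightarrow> bool) \<Rightarrow> 'b set set \<Rightarrow> bool" where
  "assumption_complete X Y R PY \<longleftrightarrow>
     (\<forall>p\<in>PY. \<exists>x\<in>X. \<forall>y\<in>Y. R x y \<longleftrightarrow> y \<in> p)"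

definition belief_complete ::
  "'a set \<Rightarrow> 'b set \<Rightarrow> ('a \<Rightarrow> 'b \<Rightarrow> bool) \<Rightarrow> 'b set set \<Rightarrow> bool" where
  "belief_complete X Y R PY \<longleftrightarrow>
     (\<forall>p\<in>PY. \<exists>x\<in>X. (\<forall>y\<in>Y. R x y \<longrightarrow> y \<in> p) \<and> (\<exists>y\<in>Y. R x y))"

definition rel_image :: "'c set \<Rightarrow> ('b \<Rightarrow> 'c \<Rightarrow> bool) \<Rightarrow> 'b \<Rightarrow> 'c set" where
  "rel_image C R y = {z\<in>C. R y z}"

definition boxplus :: "'b set \<Rightarrow> 'c set \<Rightarrow> ('b \<Rightarrow> 'c \<Rightarrow> bool) \<Rightarrow> 'c set \<Rightarrow> 'b set" where
  "boxplus B C R p = {y\<in>B. rel_image C R y = p}"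

definition rel_comp :: "'b set \<Rightarrow> ('a \<Rightarrow> 'b \<Rightarrow> bool) \<Rightarrow> ('b \<Rightarrow> 'c \<Rightarrow> bool) \<Rightarrow> 'a \<Rightarrow> 'c \<Rightarrow> bool" where
  "rel_comp B R S x z \<longleftrightarrow> (\<exists>y\<in>B. R x y \<and> S y z)"

end

theory Submission
  imports Defs
begin

text \<open>A believer in \<open>\<boxplus>\<^sub>b\<^sub>c p\<close> sees only states whose \<open>R\<^sub>b\<^sub>c\<close>-image is exactly \<open>p\<close>, and sees at
least one of them; so its image under the composite is exactly \<open>p\<close>.\<close>

lemma rel_comp_iff_of_successors_image:
  assumes "\<forall>y\<in>B. R x y \<longrightarrow> rel_image C S y = p"
    and "\<exists>y\<in>B. R x y"
    and "z \<in> C"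
  shows "rel_comp B R S x z \<longleftrightarrow> z \<in> p"
  using assms unfolding rel_comp_def rel_image_def by auto

lemma assumption_complete_rel_comp:
  assumes "belief_complete A B R PB"
    and "\<forall>p\<in>PC. boxplus B C S p \<in> PB"
  shows "assumption_complete A C (rel_comp B R S) PC"
  unfolding assumption_complete_def
proof
  fix p assume "p \<in> PC"
  then have "boxplus B C S p \<in> PB"
    using assms(2) by blast
  then obtain x where "x \<in> A"
    and "\<forall>y\<in>B. R x y \<longrightarrow> y \<in> boxplus B C S p" and "\<exists>y\<in>B. R x y"
    using assms(1) unfolding belief_complete_def by blast
  moreover from this have "\<forall>y\<in>B. R x y \<longrightarrow> rel_image C S y = p"
    unfolding boxplus_def by blast
  ultimately show "\<exists>x\<in>A. \<forall>z\<in>C. rel_comp B R S x z \<longleftrightarrow> z \<in> p"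
    using rel_comp_iff_of_successors_image[of B R x C S p] by blast
qed

theorem lemma9:
  fixes A :: "'a set" and B :: "'b set" and C :: "'c set"
    and PA :: "'a set set" and PB :: "'b set set" and PC :: "'c set set"
    and Rab :: "'a \<Rightarrow> 'b \<Rightarrow> bool" and Rbc :: "'b \<Rightarrow> 'c \<Rightarrow> bool"
  assumes PA: "\<forall>p\<in>PA. p \<subseteq> A \<and> p \<noteq> {}"
    and PB: "\<forall>p\<in>PB. p \<subseteq> B \<and> p \<noteq> {}"
    and PC: "\<forall>p\<in>PC. p \<subseteq> C \<and> p \<noteq> {}"
    and h1: "belief_complete A B Rab PB"
    and h2: "assumption_complete B C Rbc PC"
    and h3: "\<forall>p\<in>PC. boxplus B C Rbc p \<in> PB"
  shows "assumption_complete A C (rel_comp B Rab Rbc) PC"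
  using h1 h3 by (rule assumption_complete_rel_comp)

end
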